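(* Let $a,b>0$ and $\alpha\in\,]0,\pi/2]$ satisfy $2b\cos\alpha\leq a\leq b$, and let $p$ be any point of the flat torus $T_{a,b,\alpha}$. Then: <ul> <li>if $\alpha=\pi/2$, we have $\#F_p=\#F_p^4=1$;</li> <li>if $\alpha<\pi/2$, we have $\#F_p=\#F_p^3=2$.</li> </ul>
   Context: For $a,b>0$ and $\alpha\in\,]0,\pi/2]$, $T_{a,b,\alpha}$ is the flat torus $\mathbb{R}^2/\Lambda$, where $\Lambda$ is the group of translations generated by $(a,0)$ and $(b\cos\alpha,b\sin\alpha)$. Equivalently, it is the parallelogram with sides $a,b$ and angle $\alpha$ with opposite sides identified by translation. It carries the induced intrinsic (quotient) distance $d$. For a point $p$, $F_p$ is the set of farthest points from $p$, i.e. the points $q$ with $d(p,q)=\max_x d(p,x)$. A segment is a shortest path. $F_p^n$ is the set of those farthest points from $p$ that are joined to $p$ by exactly $n$ distinct segments. $\#S$ is the cardinality of a set $S$. *)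

theory Defs
  imports "HOL-Analysis.Analysis"
begin

definition tlattice :: "real \<Rightarrow> real \<Rightarrow> real \<Rightarrow> complex set" where
  "tlattice a b \<alpha> =
     {of_int m * complex_of_real a + of_int n * (complex_of_real b * cis \<alpha>) | m n. True}"

definition tpoint :: "real \<Rightarrow> real \<Rightarrow> real \<Rightarrow> complex \<Rightarrow> complex set" where
  "tpoint a b \<alpha> x = (\<lambda>l. x + l) ` tlattice a b \<alpha>"

definition torus :: "real \<Rightarrow> real \<Rightarrow> real \<Rightarrow> complex set set" where
  "torus a b \<alpha> = range (tpoint a b \<alpha>)"

definition tdist :: "complex set \<Rightarrow> complex set \<Rightarrow> real" where
  "tdist A B = Inf {cmod (x - y) | x y. x \<in> A \<and> y \<in> B}"

definition farthest :: "real \<Rightarrow> real \<Rightarrow> real \<Rightarrow> complex set \<Rightarrow> complex set set" where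
  "farthest a b \<alpha> P =
     {Q \<in> torus a b \<alpha>. \<forall>X \<in> torus a b \<alpha>. tdist P X \<le> tdist P Q}"

definition segments :: "real \<Rightarrow> real \<Rightarrow> real \<Rightarrow> complex set \<Rightarrow> complex set
     \<Rightarrow> (real \<Rightarrow> complex set) set" where
  "segments a b \<alpha> P Q =
     {\<gamma>. \<gamma> 0 = P \<and> \<gamma> (tdist P Q) = Q
        \<and> (\<forall>t \<in> {0..tdist P Q}. \<gamma> t \<in> torus a b \<alpha>)
        \<and> (\<forall>s \<in> {0..tdist P Q}. \<forall>t \<in> {0..tdist P Q}. tdist (\<gamma> s) (\<gamma> t) = \<bar>s - t\<bar>)
        \<and> (\<forall>t. t \<notin> {0..tdist P Q} \<longrightarrow> \<gamma> t = {})}"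

definition farthest_n :: "real \<Rightarrow> real \<Rightarrow> real \<Rightarrow> nat \<Rightarrow> complex set \<Rightarrow> complex set set" where
  "farthest_n a b \<alpha> n P = {Q \<in> farthest a b \<alpha> P. card (segments a b \<alpha> P Q) = n}"

end

theory Submission
  imports Defs
begin

(* Lift p to x in the plane and write u = a, v = b e^(i alpha) for the basis of the lattice.
   The hypotheses 2 b cos alpha <= a <= b say that this basis is reduced, so the triangles
   (0, u, v) and (u + v, u, v) tiling the fundamental parallelogram are not obtuse and contain
   their circumcentres c and u + v - c.  Hence every point of the plane lies within the
   circumradius R of the lattice, with equality only at the translates of x + c and x - c: these
   two points of the torus are the farthest points from p, and they coincide iff 2c is in the
   lattice, i.e. iff alpha = pi/2.  A segment from p to a farthest point q lifts to a straight
   segment from x to a lift of q at distance R, so the segments correspond to the lattice points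
   on the circumcircle of (0, u, v): these are 0, u, v, and also u + v in the rectangular case. *)

lemma norm_add_eq_imp_aligned:
  fixes x y :: "'a::real_inner"
  assumes "x \<noteq> 0" and "norm (x + y) = norm x + norm y"
  shows "x + y = (norm x + norm y) *\<^sub>R sgn x"
proof -
  have "norm x *\<^sub>R y = norm y *\<^sub>R x" using assms(2) norm_triangle_eq by blast
  then have "inverse (norm x) *\<^sub>R norm x *\<^sub>R y = norm y *\<^sub>R inverse (norm x) *\<^sub>R x"
    by (simp add: mult.commute)
  then have "y = norm y *\<^sub>R sgn x"
    using assms(1) by (simp add: sgn_div_norm)
  moreover have "x = norm x *\<^sub>R sgn x"
    using assms(1) by (simp add: sgn_div_norm)
  ultimately show ?thesis by (metis scaleR_left_distrib add.commute)
qed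

lemma norm_add3_ge_imp_aligned:
  fixes x y z :: "'a::real_inner"
  assumes "x \<noteq> 0" and "norm x + norm y + norm z \<le> norm (x + y + z)"
  shows "x + y = (norm x + norm y) *\<^sub>R sgn x"
    and "x + y + z = (norm x + norm y + norm z) *\<^sub>R sgn x"
proof -
  have xy: "norm (x + y) = norm x + norm y" and xyz: "norm (x + y + z) = norm (x + y) + norm z"
    using assms(2) norm_triangle_ineq[of x y] norm_triangle_ineq[of "x + y" z] by linarith+
  show aligned: "x + y = (norm x + norm y) *\<^sub>R sgn x"
    by (rule norm_add_eq_imp_aligned[OF assms(1) xy])
  have pos: "0 < norm x + norm y" using assms(1) by (simp add: add_pos_nonneg)
  then have "x + y \<noteq> 0" using xy by auto
  then have "x + y + z = (norm (x + y) + norm z) *\<^sub>R sgn (x + y)"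
    by (rule norm_add_eq_imp_aligned[OF _ xyz])
  moreover have "sgn (x + y) = sgn x"
  proof -
    have "sgn (sgn x) = sgn x"
      using assms(1) by (simp add: sgn_div_norm[of "sgn x"] norm_sgn)
    then show ?thesis
      using aligned pos by (simp add: sgn_scaleR)
  qed
  ultimately show "x + y + z = (norm x + norm y + norm z) *\<^sub>R sgn x" using xy by simp
qed

lemma near_vertex_of_circumscribed_triangle:
  fixes c p q r x :: "'a::real_inner"
  assumes "norm (p - c) = \<rho>" "norm (q - c) = \<rho>" "norm (r - c) = \<rho>"
    and "x \<in> convex hull {p, q, r}"
  shows "\<exists>y\<in>{p, q, r}. (norm (x - y))\<^sup>2 + (norm (x - c))\<^sup>2 \<le> \<rho>\<^sup>2"
proof -
  obtain wp wq wr where weights: "0 \<le> wp" "0 \<le> wq" "0 \<le> wr" "wp + wq + wr = 1"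
    and x: "x = wp *\<^sub>R p + wq *\<^sub>R q + wr *\<^sub>R r"
    using assms(4) by (auto simp: convex_hull_3)
  have "x - c = wp *\<^sub>R (p - c) + wq *\<^sub>R (q - c) + wr *\<^sub>R (r - c)"
  proof -
    have "x - c = x - (wp + wq + wr) *\<^sub>R c" using weights(4) by simp
    then show ?thesis by (simp add: x algebra_simps)
  qed
  then have inner_eq: "inner (x - c) (wp *\<^sub>R (p - c) + wq *\<^sub>R (q - c) + wr *\<^sub>R (r - c))
      = (norm (x - c))\<^sup>2"
    by (simp add: power2_norm_eq_inner)
  have sq: "(norm (x - y))\<^sup>2 = (norm (x - c))\<^sup>2 - 2 * inner (x - c) (y - c) + \<rho>\<^sup>2"
    if "norm (y - c) = \<rho>" for y
    unfolding that[symmetric]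
    by (simp add: power2_norm_eq_inner inner_diff_left inner_diff_right inner_commute algebra_simps)
  define mean where "mean = wp * (norm (x - p))\<^sup>2 + wq * (norm (x - q))\<^sup>2 + wr * (norm (x - r))\<^sup>2"
  have "mean = (wp + wq + wr) * ((norm (x - c))\<^sup>2 + \<rho>\<^sup>2)
      - 2 * inner (x - c) (wp *\<^sub>R (p - c) + wq *\<^sub>R (q - c) + wr *\<^sub>R (r - c))"
    unfolding mean_def sq[OF assms(1)] sq[OF assms(2)] sq[OF assms(3)]
    by (simp add: inner_add_right algebra_simps)
  then have mean_eq: "mean = \<rho>\<^sup>2 - (norm (x - c))\<^sup>2"
    using weights(4) inner_eq by simp
  have below_mean: "d \<le> mean"
    if "d \<le> (norm (x - p))\<^sup>2" "d \<le> (norm (x - q))\<^sup>2" "d \<le> (norm (x - r))\<^sup>2" for d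
  proof -
    have "d = wp * d + wq * d + wr * d" using weights(4) by (simp flip: distrib_right)
    also have "\<dots> \<le> mean"
      unfolding mean_def using that weights(1-3) by (intro add_mono mult_left_mono) auto
    finally show ?thesis .
  qed
  consider "(norm (x - p))\<^sup>2 \<le> (norm (x - q))\<^sup>2 \<and> (norm (x - p))\<^sup>2 \<le> (norm (x - r))\<^sup>2"
    | "(norm (x - q))\<^sup>2 \<le> (norm (x - p))\<^sup>2 \<and> (norm (x - q))\<^sup>2 \<le> (norm (x - r))\<^sup>2"
    | "(norm (x - r))\<^sup>2 \<le> (norm (x - p))\<^sup>2 \<and> (norm (x - r))\<^sup>2 \<le> (norm (x - q))\<^sup>2"
    by linarith
  then show ?thesis
    using below_mean mean_eq by cases (fastforce+)
qed

text \<open>If u = a and v are the basis vectors, with cmod v = b and Re v = p, and c is the circumcentre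
  of (0, u, v), then cmod (c - (m u + n v))^2 = cmod c^2 + circle_excess a b p m n.\<close>

definition circle_excess :: "real \<Rightarrow> real \<Rightarrow> real \<Rightarrow> int \<Rightarrow> int \<Rightarrow> real" where
  "circle_excess a b p m n =
     a\<^sup>2 * of_int (m * (m - 1)) + b\<^sup>2 * of_int (n * (n - 1)) + 2 * a * p * of_int (m * n)"

lemma int_mult_pred_nonneg: "0 \<le> (m::int) * (m - 1)"
  by (cases "m \<le> 0") (auto intro: mult_nonpos_nonpos)

lemma circle_excess_pos_if_opposite_signs:
  fixes a b p :: real and m n :: int
  assumes "0 < a" "a \<le> b" "2 * p \<le> a" "m * n < 0"
  shows "0 < circle_excess a b p m n"
proof -
  have n: "0 \<le> real_of_int (n * (n - 1))" using int_mult_pred_nonneg[of n] by linarith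
  have mn: "real_of_int (m * n) < 0" using assms(4) by linarith
  have "a\<^sup>2 \<le> b\<^sup>2" using assms(1,2) by (intro power_mono) auto
  then have "a\<^sup>2 * of_int (n * (n - 1)) \<le> b\<^sup>2 * of_int (n * (n - 1))"
    using n by (intro mult_right_mono)
  moreover have "a\<^sup>2 * of_int (m * n) \<le> 2 * a * p * of_int (m * n)"
    using assms(1,3) mn by (intro mult_right_mono_neg) (auto simp: power2_eq_square)
  \<comment> \<open>with b and 2p replaced by a, the form is a^2 ((m + n)(m + n - 1) - m n) \<ge> a^2\<close>
  moreover have "1 \<le> (m + n) * (m + n - 1) - m * n"
    using int_mult_pred_nonneg[of "m + n"] assms(4) by linarith
  then have "(1::real) \<le> of_int ((m + n) * (m + n - 1) - m * n)"
    by (metis of_int_1 of_int_le_iff)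
  then have "a\<^sup>2 * 1 \<le> a\<^sup>2 * of_int ((m + n) * (m + n - 1) - m * n)"
    by (intro mult_left_mono) auto
  ultimately have "a\<^sup>2 \<le> circle_excess a b p m n"
    unfolding circle_excess_def by (simp add: algebra_simps)
  moreover have "0 < a\<^sup>2" using assms(1) by simp
  ultimately show ?thesis by linarith
qed

lemma circle_excess_terms_nonneg:
  fixes a b p :: real and m n :: int
  assumes "0 < a" "0 \<le> p" "0 \<le> m * n"
  shows "0 \<le> a\<^sup>2 * of_int (m * (m - 1))" "0 \<le> b\<^sup>2 * of_int (n * (n - 1))"
    "0 \<le> 2 * a * p * of_int (m * n)"
  using assms int_mult_pred_nonneg[of m] int_mult_pred_nonneg[of n]
  by (auto intro!: mult_nonneg_nonneg simp del: of_int_mult)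

lemma circle_excess_nonneg:
  assumes "0 < a" "a \<le> b" "0 \<le> p" "2 * p \<le> a"
  shows "0 \<le> circle_excess a b p m n"
proof (cases "m * n < 0")
  case True
  then show ?thesis using circle_excess_pos_if_opposite_signs[OF assms(1,2,4)] by force
next
  case False
  then have "0 \<le> m * n" by simp
  from circle_excess_terms_nonneg[OF assms(1,3) this] show ?thesis
    unfolding circle_excess_def by (metis add_nonneg_nonneg)
qed

lemma circle_excess_eq_0_iff:
  assumes "0 < a" "a \<le> b" "0 \<le> p" "2 * p \<le> a"
  shows "circle_excess a b p m n = 0 \<longleftrightarrow>
    (m, n) \<in> {(0, 0), (1, 0), (0, 1)} \<or> p = 0 \<and> (m, n) = (1, 1)"
proof
  assume zero: "circle_excess a b p m n = 0"
  then have "0 \<le> m * n"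
    using circle_excess_pos_if_opposite_signs[OF assms(1,2,4), of m n] by linarith
  note terms = circle_excess_terms_nonneg[OF assms(1,3) this]
  have "a\<^sup>2 * of_int (m * (m - 1)) = 0" "b\<^sup>2 * of_int (n * (n - 1)) = 0"
    "2 * a * p * of_int (m * n) = 0"
    using zero terms(1,3) terms(2)[of b] unfolding circle_excess_def by linarith+
  then have "m * (m - 1) = 0" "n * (n - 1) = 0" "p = 0 \<or> m * n = 0"
    using assms(1,2) by auto
  then show "(m, n) \<in> {(0, 0), (1, 0), (0, 1)} \<or> p = 0 \<and> (m, n) = (1, 1)"
    by auto
next
  assume "(m, n) \<in> {(0, 0), (1, 0), (0, 1)} \<or> p = 0 \<and> (m, n) = (1, 1)"
  then show "circle_excess a b p m n = 0" by (auto simp: circle_excess_def)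
qed

locale flat_torus =
  fixes a b \<alpha> :: real
  assumes a_pos: "0 < a" and b_pos: "0 < b" and angle_pos: "0 < \<alpha>" and angle_less_pi: "\<alpha> < pi"
begin

abbreviation "L \<equiv> tlattice a b \<alpha>"
abbreviation "tp \<equiv> tpoint a b \<alpha>"
abbreviation "T \<equiv> torus a b \<alpha>"

definition "u = complex_of_real a"
definition "v = complex_of_real b * cis \<alpha>"

lemma Re_u [simp]: "Re u = a" and Im_u [simp]: "Im u = 0"
  and Re_v: "Re v = b * cos \<alpha>" and Im_v: "Im v = b * sin \<alpha>"
  by (simp_all add: u_def v_def)

lemma Im_v_pos: "0 < Im v"
  unfolding Im_v using b_pos angle_pos angle_less_pi by (simp add: sin_gt_zero)

lemma norm_v: "cmod v = b"
  using b_pos by (simp add: v_def norm_mult)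

lemma lattice_iff: "l \<in> L \<longleftrightarrow> (\<exists>m n :: int. l = of_int m * u + of_int n * v)"
  by (auto simp: tlattice_def u_def v_def)

lemma lattice_0 [simp]: "0 \<in> L" and lattice_u [simp]: "u \<in> L" and lattice_v [simp]: "v \<in> L"
proof -
  have "0 = of_int 0 * u + of_int 0 * v" "u = of_int 1 * u + of_int 0 * v"
    "v = of_int 0 * u + of_int 1 * v"
    by simp_all
  then show "0 \<in> L" "u \<in> L" "v \<in> L" unfolding lattice_iff by blast+
qed

lemma lattice_add [intro]: "l \<in> L \<Longrightarrow> l' \<in> L \<Longrightarrow> l + l' \<in> L"
proof -
  assume "l \<in> L" "l' \<in> L"
  then obtain m n m' n' :: int
    where "l = of_int m * u + of_int n * v" "l' = of_int m' * u + of_int n' * v"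
    unfolding lattice_iff by blast
  then show ?thesis
    unfolding lattice_iff by (intro exI[of _ "m + m'"] exI[of _ "n + n'"]) (simp add: algebra_simps)
qed

lemma lattice_uminus [intro]: "l \<in> L \<Longrightarrow> - l \<in> L"
proof -
  assume "l \<in> L"
  then obtain m n :: int where "l = of_int m * u + of_int n * v"
    unfolding lattice_iff by blast
  then show ?thesis
    unfolding lattice_iff by (intro exI[of _ "- m"] exI[of _ "- n"]) simp
qed

lemma lattice_diff [intro]: "l \<in> L \<Longrightarrow> l' \<in> L \<Longrightarrow> l - l' \<in> L"
  using lattice_add[of l "- l'"] lattice_uminus[of l'] by simp

definition "sep = min a (Im v)"

lemma sep_pos: "0 < sep"
  using a_pos Im_v_pos by (simp add: sep_def)

lemma sep_le_norm_lattice: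
  assumes "l \<in> L" "l \<noteq> 0"
  shows "sep \<le> cmod l"
proof -
  obtain m n :: int where l: "l = of_int m * u + of_int n * v"
    using assms(1) lattice_iff by blast
  show ?thesis
  proof (cases "n = 0")
    case True
    with assms(2) l have "1 \<le> \<bar>real_of_int m\<bar>" by auto
    then have "a \<le> \<bar>real_of_int m\<bar> * a" using a_pos by simp
    also have "\<dots> = cmod l" using True l a_pos by (simp add: u_def norm_mult)
    finally show ?thesis by (simp add: sep_def)
  next
    case False
    then have "1 \<le> \<bar>real_of_int n\<bar>" by linarith
    then have "Im v \<le> \<bar>real_of_int n\<bar> * Im v" using Im_v_pos by simp
    also have "\<dots> = \<bar>Im l\<bar>" using l Im_v_pos by (simp add: abs_mult)
    also have "\<dots> \<le> cmod l" by (rule abs_Im_le_cmod)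
    finally show ?thesis by (simp add: sep_def)
  qed
qed

lemma mem_tpoint_iff: "y \<in> tp x \<longleftrightarrow> y - x \<in> L"
proof
  assume "y \<in> tp x"
  then show "y - x \<in> L" unfolding tpoint_def by auto
next
  assume "y - x \<in> L"
  then have "x + (y - x) \<in> tp x" unfolding tpoint_def by blast
  then show "y \<in> tp x" by simp
qed

lemma tpoint_eq_iff: "tp x = tp y \<longleftrightarrow> x - y \<in> L"
proof
  assume "tp x = tp y"
  then show "x - y \<in> L" using mem_tpoint_iff[of x x] mem_tpoint_iff[of x y] by simp
next
  assume "x - y \<in> L"
  then have "z - x \<in> L \<longleftrightarrow> z - y \<in> L" for z
    using lattice_add[of "z - x" "x - y"] lattice_diff[of "z - y" "x - y"] by auto
  then show "tp x = tp y" by (auto simp: mem_tpoint_iff)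
qed

lemma torus_iff: "A \<in> T \<longleftrightarrow> (\<exists>x. A = tp x)"
  by (auto simp: torus_def)

lemma tpoint_in_torus [simp]: "tp x \<in> T"
  by (simp add: torus_def)

lemma tpoint_self [simp]: "x \<in> tp x"
  by (simp add: mem_tpoint_iff)

lemma torus_eq_tpoint: "A \<in> T \<Longrightarrow> z \<in> A \<Longrightarrow> A = tp z"
  by (metis torus_iff mem_tpoint_iff tpoint_eq_iff)

lemma eq_if_close_in_tpoint:
  assumes "A \<in> T" "y \<in> A" "y' \<in> A" "cmod (y - y') < sep"
  shows "y = y'"
proof (rule ccontr)
  assume "y \<noteq> y'"
  moreover have "y - y' \<in> L"
    using assms torus_eq_tpoint[of A y] mem_tpoint_iff lattice_uminus by (metis minus_diff_eq)
  ultimately show False using sep_le_norm_lattice[of "y - y'"] assms(4) by simp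
qed

lemma closed_tpoint: "closed (tp x)"
  by (rule discrete_imp_closed[OF sep_pos])
     (auto simp: dist_norm intro: eq_if_close_in_tpoint[OF tpoint_in_torus])

lemma tdist_le: "x \<in> A \<Longrightarrow> y \<in> B \<Longrightarrow> tdist A B \<le> cmod (x - y)"
  unfolding tdist_def by (rule cInf_lower) (auto intro: bdd_belowI[of _ 0])

lemma tdist_attained:
  assumes "A \<in> T" "B \<in> T" "z \<in> A"
  obtains w where "w \<in> B" "cmod (z - w) = tdist A B"
proof -
  obtain y where B: "B = tp y" using assms(2) torus_iff by blast
  then have "closed B" "B \<noteq> {}" using closed_tpoint tpoint_self by blast+
  then obtain w where w: "w \<in> B" and min: "\<And>w'. w' \<in> B \<Longrightarrow> dist z w \<le> dist z w'"
    by (rule distance_attains_inf[where a = z]) blast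
  have "tdist A B = cmod (z - w)"
    unfolding tdist_def
  proof (rule cInf_eq_minimum)
    fix r assume "r \<in> {cmod (x - y) |x y. x \<in> A \<and> y \<in> B}"
    then obtain x' y' where r: "r = cmod (x' - y')" "x' \<in> A" "y' \<in> B" by blast
    have "x' - z \<in> L"
      using r(2) torus_eq_tpoint[OF assms(1,3)] mem_tpoint_iff by blast
    then have "(y' + (z - x')) - y' \<in> L"
      using lattice_uminus by fastforce
    then have "y' + (z - x') \<in> B"
      using torus_eq_tpoint[OF assms(2) r(3)] mem_tpoint_iff by blast
    moreover have "z - (y' + (z - x')) = x' - y'" by simp
    ultimately show "cmod (z - w) \<le> r"
      using min[of "y' + (z - x')"] r(1) by (simp add: dist_norm)
  qed (use w assms(3) in blast)
  with w that show ?thesis by simp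
qed

lemma tdist_commute: "tdist A B = tdist B A"
proof -
  have swap: "{cmod (x - y) |x y. x \<in> A \<and> y \<in> B} \<subseteq> {cmod (x - y) |x y. x \<in> B \<and> y \<in> A}"
    for A B :: "complex set"
  proof
    fix r assume "r \<in> {cmod (x - y) |x y. x \<in> A \<and> y \<in> B}"
    then obtain x y where "r = cmod (y - x)" "x \<in> A" "y \<in> B"
      using norm_minus_commute by blast
    then show "r \<in> {cmod (x - y) |x y. x \<in> B \<and> y \<in> A}" by blast
  qed
  show ?thesis
    unfolding tdist_def using subset_antisym[OF swap swap] by simp
qed

lemma tdist_triangle:
  assumes "A \<in> T" "B \<in> T" "C \<in> T"
  shows "tdist A C \<le> tdist A B + tdist B C"
proof -
  obtain x where x: "x \<in> A" using assms(1) torus_iff tpoint_self by blast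
  obtain y where y: "y \<in> B" "cmod (x - y) = tdist A B" by (rule tdist_attained[OF assms(1,2) x])
  obtain z where z: "z \<in> C" "cmod (y - z) = tdist B C" by (rule tdist_attained[OF assms(2,3) y(1)])
  have "tdist A C \<le> cmod (x - z)" using tdist_le x z by blast
  also have "\<dots> \<le> cmod (x - y) + cmod (y - z)" using norm_triangle_ineq[of "x - y" "y - z"] by simp
  finally show ?thesis using y z by simp
qed

definition lifted_segment :: "complex \<Rightarrow> complex \<Rightarrow> real \<Rightarrow> complex set" where
  "lifted_segment x s t =
     (if t \<in> {0..cmod (s - x)} then tp (x + of_real t * sgn (s - x)) else {})"

lemma norm_ray_diff: "cmod \<zeta> = 1 \<Longrightarrow> cmod ((x + of_real t * \<zeta>) - (x + of_real t' * \<zeta>)) = \<bar>t - t'\<bar>"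
  by (simp add: norm_mult flip: left_diff_distrib of_real_diff)

lemma lifted_segment_in_segments:
  assumes Q: "Q \<in> T" and s: "s \<in> Q" "s \<noteq> x" and dist_s: "cmod (s - x) = tdist (tp x) Q"
  shows "lifted_segment x s \<in> segments a b \<alpha> (tp x) Q"
proof -
  define d where "d = cmod (s - x)"
  define \<zeta> where "\<zeta> = sgn (s - x)"
  let ?\<gamma> = "lifted_segment x s"
  have \<zeta>: "cmod \<zeta> = 1" using s(2) by (simp add: \<zeta>_def norm_sgn)
  have \<gamma>: "?\<gamma> t = tp (x + of_real t * \<zeta>)" if "t \<in> {0..d}" for t
    using that by (simp add: lifted_segment_def d_def \<zeta>_def)
  have end_point: "x + of_real d * \<zeta> = s"
    using s(2) by (simp add: d_def \<zeta>_def sgn_eq)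
  have "0 \<le> d" by (simp add: d_def)
  have iso: "tdist (?\<gamma> t) (?\<gamma> t') = t' - t" if "0 \<le> t" "t \<le> t'" "t' \<le> d" for t t'
  proof -
    have in_T: "?\<gamma> t \<in> T" "?\<gamma> t' \<in> T" using \<gamma> that by auto
    have "tdist (?\<gamma> t) (?\<gamma> t') \<le> t' - t"
      using tdist_le[of "x + of_real t * \<zeta>" "?\<gamma> t" "x + of_real t' * \<zeta>" "?\<gamma> t'"]
        \<gamma> that norm_ray_diff[OF \<zeta>] by simp
    moreover have "tdist (tp x) (?\<gamma> t) \<le> t"
      using tdist_le[of x "tp x" "x + of_real t * \<zeta>" "?\<gamma> t"] \<gamma> that norm_ray_diff[OF \<zeta>, of x 0 t]
      by simp
    moreover have "tdist (?\<gamma> t') Q \<le> d - t'"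
      using tdist_le[of "x + of_real t' * \<zeta>" "?\<gamma> t'" s Q] \<gamma> that s(1) end_point
        norm_ray_diff[OF \<zeta>, of x t' d] by simp
    moreover have "d \<le> tdist (tp x) (?\<gamma> t) + tdist (?\<gamma> t) (?\<gamma> t') + tdist (?\<gamma> t') Q"
      using tdist_triangle[of "tp x" "?\<gamma> t" Q] tdist_triangle[of "?\<gamma> t" "?\<gamma> t'" Q] in_T Q dist_s
      by (simp add: d_def)
    ultimately show ?thesis by linarith
  qed
  show ?thesis
    unfolding segments_def dist_s[symmetric] d_def[symmetric] mem_Collect_eq
  proof (intro conjI ballI allI impI)
    show "?\<gamma> 0 = tp x" using \<gamma>[of 0] \<open>0 \<le> d\<close> by simp
    show "?\<gamma> d = Q" using \<gamma>[of d] \<open>0 \<le> d\<close> end_point torus_eq_tpoint[OF Q s(1)] by simp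
    show "?\<gamma> t \<in> T" if "t \<in> {0..d}" for t using \<gamma>[OF that] by simp
    show "?\<gamma> t = {}" if "t \<notin> {0..d}" for t using that unfolding lifted_segment_def d_def by auto
    show "tdist (?\<gamma> t) (?\<gamma> t') = \<bar>t - t'\<bar>" if "t \<in> {0..d}" "t' \<in> {0..d}" for t t'
    proof (cases "t \<le> t'")
      case True
      then show ?thesis using iso[of t t'] that by simp
    next
      case False
      then show ?thesis using iso[of t' t] that tdist_commute[of "?\<gamma> t"] by simp
    qed
  qed
qed

lemma segment_follows_ray:
  assumes \<gamma>: "\<gamma> \<in> segments a b \<alpha> (tp x) Q" and Q: "Q \<in> T"
    and t0: "0 < t0" "t0 \<le> tdist (tp x) Q"
  obtains \<zeta> where "cmod \<zeta> = 1" "x + of_real (tdist (tp x) Q) * \<zeta> \<in> Q"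
    "\<And>t. t0 \<le> t \<Longrightarrow> t \<le> tdist (tp x) Q \<Longrightarrow> \<gamma> t = tp (x + of_real t * \<zeta>)"
proof -
  define d where "d = tdist (tp x) Q"
  from \<gamma> have \<gamma>0: "\<gamma> 0 = tp x" and \<gamma>d: "\<gamma> d = Q" and \<gamma>T: "\<And>t. t \<in> {0..d} \<Longrightarrow> \<gamma> t \<in> T"
    and iso: "\<And>t t'. t \<in> {0..d} \<Longrightarrow> t' \<in> {0..d} \<Longrightarrow> tdist (\<gamma> t) (\<gamma> t') = \<bar>t - t'\<bar>"
    unfolding segments_def d_def by auto
  have t0d: "t0 \<in> {0..d}" using t0 by (simp add: d_def)
  have "\<gamma> 0 \<in> T" "x \<in> \<gamma> 0" using \<gamma>0 by simp_all
  then obtain z where z: "z \<in> \<gamma> t0" "cmod (x - z) = tdist (\<gamma> 0) (\<gamma> t0)"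
    using tdist_attained[OF _ \<gamma>T[OF t0d]] by blast
  have "cmod (z - x) = t0" using z(2) iso[of 0 t0] t0d t0 by (simp add: norm_minus_commute)
  then have "z - x \<noteq> 0" using t0 by auto
  define \<zeta> where "\<zeta> = sgn (z - x)"
  have along: "x + of_real d * \<zeta> \<in> Q \<and> \<gamma> t = tp (x + of_real t * \<zeta>)" if "t0 \<le> t" "t \<le> d" for t
  proof -
    have td: "t \<in> {0..d}" using that t0 by simp
    obtain w where w: "w \<in> \<gamma> t" "cmod (z - w) = tdist (\<gamma> t0) (\<gamma> t)"
      by (rule tdist_attained[OF \<gamma>T[OF t0d] \<gamma>T[OF td] z(1)])
    obtain s where s: "s \<in> Q" "cmod (w - s) = tdist (\<gamma> t) Q"
      by (rule tdist_attained[OF \<gamma>T[OF td] Q w(1)])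
    \<comment> \<open>the broken line x, z, w, s has length t0 + (t - t0) + (d - t) = d, the distance from x to Q\<close>
    have wz: "cmod (w - z) = t - t0" using w(2) iso[of t0 t] t0d td that by (simp add: norm_minus_commute)
    have sw: "cmod (s - w) = d - t" using s(2) iso[of t d] td \<gamma>d that t0
      by (simp add: norm_minus_commute)
    have "cmod (z - x) + cmod (w - z) + cmod (s - w) \<le> cmod ((z - x) + (w - z) + (s - w))"
    proof -
      have "d \<le> cmod (s - x)"
        using tdist_le[OF tpoint_self[of x] s(1)] by (simp add: d_def norm_minus_commute[of x s])
      then show ?thesis using \<open>cmod (z - x) = t0\<close> wz sw by simp
    qed
    note aligned = norm_add3_ge_imp_aligned[OF \<open>z - x \<noteq> 0\<close> this]
    have "(z - x) + (w - z) = w - x" "(z - x) + (w - z) + (s - w) = s - x" by simp_all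
    then have "w - x = t *\<^sub>R \<zeta>" "s - x = d *\<^sub>R \<zeta>"
      using aligned \<open>cmod (z - x) = t0\<close> wz sw by (simp_all add: \<zeta>_def)
    then have "w = x + of_real t * \<zeta>" "s = x + of_real d * \<zeta>"
      by (simp_all add: scaleR_conv_of_real algebra_simps)
    then show ?thesis using s(1) torus_eq_tpoint[OF \<gamma>T[OF td] w(1)] by simp
  qed
  show thesis
  proof (rule that)
    show "cmod \<zeta> = 1" using \<open>z - x \<noteq> 0\<close> by (simp add: \<zeta>_def norm_sgn)
    show "x + of_real (tdist (tp x) Q) * \<zeta> \<in> Q" using along[of d] t0 by (simp add: d_def)
    show "\<gamma> t = tp (x + of_real t * \<zeta>)" if "t0 \<le> t" "t \<le> tdist (tp x) Q" for t
      using along that by (simp add: d_def)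
  qed
qed

lemma ray_direction_unique:
  assumes "0 < t" "2 * t < sep" "cmod \<zeta> = 1" "cmod \<zeta>' = 1"
    and eq: "tp (x + of_real t * \<zeta>) = tp (x + of_real t * \<zeta>')"
  shows "\<zeta> = \<zeta>'"
proof -
  have "cmod ((x + of_real t * \<zeta>) - (x + of_real t * \<zeta>')) = t * cmod (\<zeta> - \<zeta>')"
    using assms(1) by (simp add: norm_mult flip: right_diff_distrib)
  also have "\<dots> \<le> t * (cmod \<zeta> + cmod \<zeta>')"
    using assms(1) norm_triangle_ineq4 by (intro mult_left_mono) auto
  finally have "cmod ((x + of_real t * \<zeta>) - (x + of_real t * \<zeta>')) < sep"
    using assms(2-4) by simp
  then have "x + of_real t * \<zeta> = x + of_real t * \<zeta>'"
    using eq_if_close_in_tpoint[OF tpoint_in_torus tpoint_self] eq tpoint_self by metis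
  then show ?thesis using assms(1) by simp
qed

lemma segments_eq_lifted_segments:
  assumes Q: "Q \<in> T" and d: "0 < tdist (tp x) Q"
  shows "segments a b \<alpha> (tp x) Q = lifted_segment x ` {s \<in> Q. cmod (s - x) = tdist (tp x) Q}"
proof
  show "lifted_segment x ` {s \<in> Q. cmod (s - x) = tdist (tp x) Q} \<subseteq> segments a b \<alpha> (tp x) Q"
    using lifted_segment_in_segments[OF Q] d by force
next
  show "segments a b \<alpha> (tp x) Q \<subseteq> lifted_segment x ` {s \<in> Q. cmod (s - x) = tdist (tp x) Q}"
  proof
    fix \<gamma> assume \<gamma>: "\<gamma> \<in> segments a b \<alpha> (tp x) Q"
    define d where "d = tdist (tp x) Q"
    define t1 where "t1 = min (sep / 4) d"
    have t1: "0 < t1" "t1 \<le> d" "2 * t1 < sep" using sep_pos d by (auto simp: t1_def d_def)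
    obtain \<zeta> where \<zeta>: "cmod \<zeta> = 1" "x + of_real d * \<zeta> \<in> Q"
      and \<gamma>\<zeta>: "\<And>t. t1 \<le> t \<Longrightarrow> t \<le> d \<Longrightarrow> \<gamma> t = tp (x + of_real t * \<zeta>)"
      using segment_follows_ray[OF \<gamma> Q t1(1)] t1(2) unfolding d_def by metis
    define s where "s = x + of_real d * \<zeta>"
    have "s - x = of_real d * \<zeta>" by (simp add: s_def)
    then have s: "cmod (s - x) = d" "sgn (s - x) = \<zeta>"
      using d \<zeta>(1) by (simp_all add: norm_mult d_def sgn_mult sgn_of_real sgn_eq)
    have "\<gamma> t = lifted_segment x s t" for t
    proof -
      consider "t \<notin> {0..d}" | "t = 0" | "0 < t" "t \<le> d" by fastforce
      then show ?thesis
      proof cases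
        case 1
        then show ?thesis using \<gamma> s by (auto simp: segments_def lifted_segment_def d_def)
      next
        case 2
        then show ?thesis using \<gamma> s d by (simp add: segments_def lifted_segment_def d_def)
      next
        case 3
        have t0: "0 < min t t1" "min t t1 \<le> tdist (tp x) Q" using 3 t1 by (auto simp: d_def)
        obtain \<zeta>' where \<zeta>': "cmod \<zeta>' = 1" "x + of_real d * \<zeta>' \<in> Q"
          and \<gamma>\<zeta>': "\<And>t'. min t t1 \<le> t' \<Longrightarrow> t' \<le> d \<Longrightarrow> \<gamma> t' = tp (x + of_real t' * \<zeta>')"
          using segment_follows_ray[OF \<gamma> Q t0, folded d_def] by metis
        have "tp (x + of_real t1 * \<zeta>') = tp (x + of_real t1 * \<zeta>)"
          using \<gamma>\<zeta>'[of t1] \<gamma>\<zeta>[of t1] t1 by simp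
        then have "\<zeta>' = \<zeta>" by (rule ray_direction_unique[OF t1(1,3) \<zeta>'(1) \<zeta>(1)])
        then show ?thesis using \<gamma>\<zeta>'[of t] 3 s by (simp add: lifted_segment_def)
      qed
    qed
    then have "\<gamma> = lifted_segment x s" by blast
    moreover have "s \<in> Q" using \<zeta>(2) by (simp add: s_def)
    ultimately show "\<gamma> \<in> lifted_segment x ` {s \<in> Q. cmod (s - x) = tdist (tp x) Q}"
      using s(1) by (auto simp: d_def)
  qed
qed

lemma inj_on_lifted_segment:
  assumes "0 < d"
  shows "inj_on (lifted_segment x) {s. cmod (s - x) = d}"
proof (rule inj_onI)
  fix s s' assume s: "s \<in> {s. cmod (s - x) = d}" "s' \<in> {s. cmod (s - x) = d}"
    and eq: "lifted_segment x s = lifted_segment x s'"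
  define t1 where "t1 = min (sep / 4) d"
  have t1: "0 < t1" "t1 \<le> d" "2 * t1 < sep" using sep_pos assms by (auto simp: t1_def)
  have "s - x \<noteq> 0" "s' - x \<noteq> 0" using s assms by auto
  then have unit: "cmod (sgn (s - x)) = 1" "cmod (sgn (s' - x)) = 1" by (simp_all add: norm_sgn)
  have "tp (x + of_real t1 * sgn (s - x)) = tp (x + of_real t1 * sgn (s' - x))"
    using fun_cong[OF eq, of t1] s t1 by (simp add: lifted_segment_def)
  then have "sgn (s - x) = sgn (s' - x)" by (rule ray_direction_unique[OF t1(1,3) unit])
  then have "of_real (cmod (s - x)) * sgn (s - x) = of_real (cmod (s' - x)) * sgn (s' - x)"
    using s by simp
  moreover have "s \<noteq> x" "s' \<noteq> x" using \<open>s - x \<noteq> 0\<close> \<open>s' - x \<noteq> 0\<close> by simp_all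
  ultimately show "s = s'" by (simp add: sgn_eq)
qed

lemma card_segments:
  assumes "Q \<in> T" "0 < tdist (tp x) Q"
  shows "card (segments a b \<alpha> (tp x) Q) = card {s \<in> Q. cmod (s - x) = tdist (tp x) Q}"
  unfolding segments_eq_lifted_segments[OF assms]
  by (rule card_image, rule inj_on_subset[OF inj_on_lifted_segment[OF assms(2)]]) auto

end

locale reduced_flat_torus = flat_torus +
  assumes angle_le_pi_half: "\<alpha> \<le> pi / 2"
    and two_b_cos_le: "2 * b * cos \<alpha> \<le> a" and a_le_b: "a \<le> b"
begin

lemma Re_v_nonneg: "0 \<le> Re v"
  unfolding Re_v using b_pos angle_pos angle_le_pi_half by (simp add: cos_ge_zero)

lemma two_Re_v_le: "2 * Re v \<le> a"
  using two_b_cos_le by (simp add: Re_v)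

lemma Re_v_eq_0_iff: "Re v = 0 \<longleftrightarrow> \<alpha> = pi / 2"
proof
  assume "Re v = 0"
  then have "cos \<alpha> = 0" using b_pos by (simp add: Re_v)
  moreover have "\<alpha> < pi / 2 \<Longrightarrow> 0 < cos \<alpha>" using angle_pos by (intro cos_gt_zero) auto
  ultimately show "\<alpha> = pi / 2" using angle_le_pi_half by fastforce
next
  assume "\<alpha> = pi / 2"
  then have "cos \<alpha> = 0" by (simp only: cos_pi_half)
  then show "Re v = 0" by (simp add: Re_v)
qed

lemma Re_sq_plus_Im_sq_v: "(Re v)\<^sup>2 + (Im v)\<^sup>2 = b\<^sup>2"
  using norm_v by (simp add: cmod_power2 flip: cmod_power2)

text \<open>The circumcentre of the triangle (0, u, v).\<close>

definition "centre = Complex (a / 2) ((b\<^sup>2 - a * Re v) / (2 * Im v))"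

definition "radius = cmod centre"

lemma radius_pos: "0 < radius"
  using a_pos by (simp add: radius_def centre_def complex_eq_iff)

lemma norm_centre_minus_lattice_sq:
  "(cmod (centre - (of_int m * u + of_int n * v)))\<^sup>2 = radius\<^sup>2 + circle_excess a b (Re v) m n"
proof -
  define k where "k = (b\<^sup>2 - a * Re v) / (2 * Im v)"
  have centre: "centre = Complex (a / 2) k" by (simp add: centre_def k_def)
  have k: "2 * Im v * k = b\<^sup>2 - a * Re v" using Im_v_pos by (simp add: k_def)
  have "(cmod (centre - (of_int m * u + of_int n * v)))\<^sup>2
      = (a / 2 - (of_int m * a + of_int n * Re v))\<^sup>2 + (k - of_int n * Im v)\<^sup>2"
    by (simp add: centre cmod_power2)
  moreover have "radius\<^sup>2 = (a / 2)\<^sup>2 + k\<^sup>2" by (simp add: radius_def centre cmod_power2)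
  moreover have "(a / 2 - (of_int m * a + of_int n * Re v))\<^sup>2 + (k - of_int n * Im v)\<^sup>2
      - ((a / 2)\<^sup>2 + k\<^sup>2) - circle_excess a b (Re v) m n
      = (of_int n)\<^sup>2 * ((Re v)\<^sup>2 + (Im v)\<^sup>2 - b\<^sup>2) + of_int n * (b\<^sup>2 - a * Re v - 2 * Im v * k)"
    by (simp add: circle_excess_def power2_eq_square algebra_simps)
  ultimately show ?thesis using k Re_sq_plus_Im_sq_v by simp
qed

lemma radius_le_norm_centre_minus_lattice:
  assumes "l \<in> L"
  shows "radius \<le> cmod (centre - l)"
proof -
  obtain m n :: int where l: "l = of_int m * u + of_int n * v" using assms lattice_iff by blast
  have "radius\<^sup>2 \<le> (cmod (centre - l))\<^sup>2"
    using norm_centre_minus_lattice_sq[of m n] l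
      circle_excess_nonneg[OF a_pos a_le_b Re_v_nonneg two_Re_v_le] by simp
  then show ?thesis using power2_le_imp_le by fastforce
qed

lemma lattice_points_on_circumcircle:
  "{l \<in> L. cmod (centre - l) = radius} = (if Re v = 0 then {0, u, v, u + v} else {0, u, v})"
proof -
  have on_circle: "cmod (centre - (of_int m * u + of_int n * v)) = radius \<longleftrightarrow>
      (m, n) \<in> {(0, 0), (1, 0), (0, 1)} \<or> Re v = 0 \<and> (m, n) = (1, 1)" for m n
  proof -
    have "cmod (centre - (of_int m * u + of_int n * v)) = radius \<longleftrightarrow>
        (cmod (centre - (of_int m * u + of_int n * v)))\<^sup>2 = radius\<^sup>2"
      using radius_pos by (simp add: power2_eq_iff_nonneg)
    also have "\<dots> \<longleftrightarrow> circle_excess a b (Re v) m n = 0"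
      by (simp add: norm_centre_minus_lattice_sq)
    finally show ?thesis
      using circle_excess_eq_0_iff[OF a_pos a_le_b Re_v_nonneg two_Re_v_le] by simp
  qed
  have "l \<in> L \<and> cmod (centre - l) = radius \<longleftrightarrow>
      l \<in> (if Re v = 0 then {0, u, v, u + v} else {0, u, v})" for l
  proof
    assume l: "l \<in> L \<and> cmod (centre - l) = radius"
    then obtain m n :: int where "l = of_int m * u + of_int n * v"
      using lattice_iff by blast
    with l show "l \<in> (if Re v = 0 then {0, u, v, u + v} else {0, u, v})"
      using on_circle by auto
  next
    assume "l \<in> (if Re v = 0 then {0, u, v, u + v} else {0, u, v})"
    then show "l \<in> L \<and> cmod (centre - l) = radius"
      using on_circle[of 0 0] on_circle[of 1 0] on_circle[of 0 1] on_circle[of 1 1]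
      by (auto split: if_splits)
  qed
  then show ?thesis by blast
qed

lemma card_lattice_points_on_circumcircle:
  "card {l \<in> L. cmod (centre - l) = radius} = (if Re v = 0 then 4 else 3)"
proof -
  have "u \<noteq> 0" "v \<noteq> 0" "u \<noteq> v" "u + v \<noteq> 0" "u + v \<noteq> u" "u + v \<noteq> v"
    using a_pos Im_v_pos by (auto simp: complex_eq_iff)
  then show ?thesis by (simp add: lattice_points_on_circumcircle)
qed

lemma two_centre_in_lattice_iff: "2 * centre \<in> L \<longleftrightarrow> Re v = 0"
proof
  assume "2 * centre \<in> L"
  then obtain m n :: int where "2 * centre = of_int m * u + of_int n * v"
    using lattice_iff by blast
  from arg_cong[OF this, of Im] have n: "of_int n * (Im v)\<^sup>2 = b\<^sup>2 - a * Re v"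
    using Im_v_pos by (simp add: centre_def field_simps power2_eq_square)
  show "Re v = 0"
  proof (rule ccontr)
    assume "Re v \<noteq> 0"
    then have "0 < Re v" using Re_v_nonneg by simp
    \<comment> \<open>then 0 < n (Im v)^2 < (Im v)^2, impossible for an integer n\<close>
    have "a * Re v \<le> a * (a / 2)" using two_Re_v_le a_pos by simp
    moreover have "a * a \<le> b * b" using a_pos a_le_b by (intro mult_mono) auto
    moreover have "0 < a * a" using a_pos by simp
    ultimately have "0 < of_int n * (Im v)\<^sup>2" using n by (simp add: power2_eq_square)
    moreover have "(Re v)\<^sup>2 < a * Re v"
      using \<open>0 < Re v\<close> two_Re_v_le by (simp add: power2_eq_square)
    then have "of_int n * (Im v)\<^sup>2 < 1 * (Im v)\<^sup>2" using n Re_sq_plus_Im_sq_v by simp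
    ultimately have "0 < real_of_int n" "real_of_int n < 1"
      using Im_v_pos by (simp_all add: zero_less_mult_iff mult_less_cancel_right)
    then have "0 < n" "n < 1" by simp_all
    then show False by simp
  qed
next
  assume "Re v = 0"
  then have "Im v = b" using Re_sq_plus_Im_sq_v Im_v_pos b_pos by (simp add: power2_eq_iff_nonneg)
  then have "2 * centre = u + v"
    using \<open>Re v = 0\<close> b_pos by (simp add: centre_def complex_eq_iff power2_eq_square)
  then show "2 * centre \<in> L" by (simp add: lattice_add)
qed

lemma covering_by_lattice:
  "\<exists>l\<in>L. \<exists>l'\<in>L. \<exists>c\<in>{centre, - centre}. (cmod (z - l))\<^sup>2 + (cmod (z - (l' + c)))\<^sup>2 \<le> radius\<^sup>2"
proof -
  define \<eta> where "\<eta> = Im z / Im v"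
  define \<xi> where "\<xi> = (Re z - \<eta> * Re v) / a"
  define l0 where "l0 = of_int \<lfloor>\<xi>\<rfloor> * u + of_int \<lfloor>\<eta>\<rfloor> * v"
  define x y where "x = \<xi> - of_int \<lfloor>\<xi>\<rfloor>" and "y = \<eta> - of_int \<lfloor>\<eta>\<rfloor>"
  have xy: "0 \<le> x" "x < 1" "0 \<le> y" "y < 1" unfolding x_def y_def by linarith+
  have "l0 \<in> L" unfolding l0_def lattice_iff by blast
  have "z = of_real \<xi> * u + of_real \<eta> * v"
    using Im_v_pos a_pos by (simp add: complex_eq_iff \<xi>_def \<eta>_def)
  then have w: "z - l0 = x *\<^sub>R u + y *\<^sub>R v"
    by (simp add: l0_def x_def y_def scaleR_conv_of_real algebra_simps)
  have on_circle: "cmod (centre - l) = radius" if "l \<in> {0, u, v}" for l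
    using that lattice_points_on_circumcircle by (auto split: if_splits)
  \<comment> \<open>the parallelogram spanned by u and v is cut into the triangles (0, u, v) and (u + v, u, v),
    with circumcentres centre and u + v - centre\<close>
  show ?thesis
  proof (cases "x + y \<le> 1")
    case True
    have "z - l0 \<in> convex hull {0, u, v}"
      unfolding convex_hull_3 w using xy True
      by (intro CollectI exI[of _ "1 - x - y"] exI[of _ x] exI[of _ y]) auto
    moreover have "cmod (0 - centre) = radius" "cmod (u - centre) = radius" "cmod (v - centre) = radius"
      using on_circle norm_minus_commute[of centre] by (simp_all add: radius_def)
    ultimately obtain q where q: "q \<in> {0, u, v}"
      and "(cmod (z - l0 - q))\<^sup>2 + (cmod (z - l0 - centre))\<^sup>2 \<le> radius\<^sup>2"
      using near_vertex_of_circumscribed_triangle by blast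
    then have "(cmod (z - (l0 + q)))\<^sup>2 + (cmod (z - (l0 + centre)))\<^sup>2 \<le> radius\<^sup>2"
      by (simp add: diff_diff_eq)
    moreover have "l0 + q \<in> L" using q \<open>l0 \<in> L\<close> by auto
    ultimately show ?thesis using \<open>l0 \<in> L\<close> by blast
  next
    case False
    have "z - l0 \<in> convex hull {u + v, u, v}"
      unfolding convex_hull_3 w using xy False
      by (intro CollectI exI[of _ "x + y - 1"] exI[of _ "1 - y"] exI[of _ "1 - x"])
         (auto simp: algebra_simps)
    moreover have "u + v - (u + v - centre) = centre - 0" "u - (u + v - centre) = centre - v"
      "v - (u + v - centre) = centre - u" by simp_all
    then have "cmod (u + v - (u + v - centre)) = radius" "cmod (u - (u + v - centre)) = radius"
      "cmod (v - (u + v - centre)) = radius"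
      using on_circle[of 0] on_circle[of u] on_circle[of v] by simp_all
    ultimately obtain q where q: "q \<in> {u + v, u, v}"
      and near: "(cmod (z - l0 - q))\<^sup>2 + (cmod (z - l0 - (u + v - centre)))\<^sup>2 \<le> radius\<^sup>2"
      using near_vertex_of_circumscribed_triangle by blast
    have "z - l0 - q = z - (l0 + q)" "z - l0 - (u + v - centre) = z - ((l0 + (u + v)) + - centre)"
      by simp_all
    with near have "(cmod (z - (l0 + q)))\<^sup>2 + (cmod (z - ((l0 + (u + v)) + - centre)))\<^sup>2 \<le> radius\<^sup>2"
      by simp
    moreover have "l0 + q \<in> L" "l0 + (u + v) \<in> L" using q \<open>l0 \<in> L\<close> by (auto intro!: lattice_add)
    ultimately show ?thesis by blast
  qed
qed

lemma tdist_le_radius: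
  assumes "Q \<in> T"
  shows "tdist (tp x) Q \<le> radius"
    and "tdist (tp x) Q = radius \<Longrightarrow> Q \<in> {tp (x + centre), tp (x - centre)}"
proof -
  obtain y where Q: "Q = tp y" using assms torus_iff by blast
  obtain l l' c where l: "l \<in> L" "l' \<in> L" "c \<in> {centre, - centre}"
    and cover: "(cmod (y - x - l))\<^sup>2 + (cmod (y - x - (l' + c)))\<^sup>2 \<le> radius\<^sup>2"
    using covering_by_lattice[of "y - x"] by blast
  have "y - l \<in> Q" using Q l(1) by (simp add: mem_tpoint_iff lattice_uminus)
  moreover have "x - (y - l) = - (y - x - l)" by simp
  ultimately have le: "tdist (tp x) Q \<le> cmod (y - x - l)"
    using tdist_le[OF tpoint_self[of x], of "y - l" Q] by (simp only: norm_minus_cancel)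
  have "(cmod (y - x - l))\<^sup>2 \<le> radius\<^sup>2"
    using cover zero_le_power2[of "cmod (y - x - (l' + c))"] by linarith
  then have "cmod (y - x - l) \<le> radius" using radius_pos by (simp add: power2_le_iff_abs_le)
  with le show "tdist (tp x) Q \<le> radius" by simp
  assume "tdist (tp x) Q = radius"
  then have "radius\<^sup>2 \<le> (cmod (y - x - l))\<^sup>2" using le radius_pos by (simp add: power_mono)
  then have "(cmod (y - x - (l' + c)))\<^sup>2 \<le> 0" using cover by linarith
  then have "y - x - (l' + c) = 0" by simp
  then have "Q = tp (x + c)" using Q l(2) tpoint_eq_iff by (simp add: algebra_simps)
  then show "Q \<in> {tp (x + centre), tp (x - centre)}" using l(3) by auto
qed

lemma tdist_to_centre_translate:
  assumes "c \<in> {centre, - centre}"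
  shows "tdist (tp x) (tp (x + c)) = radius"
proof -
  obtain w where w: "w \<in> tp (x + c)" "cmod (x - w) = tdist (tp x) (tp (x + c))"
    by (rule tdist_attained[OF tpoint_in_torus tpoint_in_torus tpoint_self])
  define l where "l = w - (x + c)"
  have "l \<in> L" using w(1) by (simp add: l_def mem_tpoint_iff)
  from assms consider "c = centre" | "c = - centre" by blast
  then have "radius \<le> cmod (x - w)"
  proof cases
    case 1
    then have "centre - (- l) = w - x" by (simp add: l_def)
    then show ?thesis
      using radius_le_norm_centre_minus_lattice[of "- l"] \<open>l \<in> L\<close> norm_minus_commute[of x w]
      by (simp add: lattice_uminus)
  next
    case 2
    then have "centre - l = x - w" by (simp add: l_def)
    then show ?thesis using radius_le_norm_centre_minus_lattice[OF \<open>l \<in> L\<close>] by simp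
  qed
  then show ?thesis using w(2) tdist_le_radius(1)[of "tp (x + c)" x] by simp
qed

lemma farthest_tpoint: "farthest a b \<alpha> (tp x) = {tp (x + centre), tp (x - centre)}"
proof
  have far: "tdist (tp x) (tp (x + centre)) = radius" "tdist (tp x) (tp (x - centre)) = radius"
    using tdist_to_centre_translate[of centre x] tdist_to_centre_translate[of "- centre" x]
    by simp_all
  show "farthest a b \<alpha> (tp x) \<subseteq> {tp (x + centre), tp (x - centre)}"
  proof
    fix Q assume "Q \<in> farthest a b \<alpha> (tp x)"
    then have "Q \<in> T" "\<forall>X\<in>T. tdist (tp x) X \<le> tdist (tp x) Q"
      by (simp_all add: farthest_def)
    then have "Q \<in> T" "radius \<le> tdist (tp x) Q"
      using far(1) tpoint_in_torus by metis+
    then show "Q \<in> {tp (x + centre), tp (x - centre)}"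
      using tdist_le_radius[of Q x] by linarith
  qed
  show "{tp (x + centre), tp (x - centre)} \<subseteq> farthest a b \<alpha> (tp x)"
    using far tdist_le_radius(1)[of _ x] by (auto simp: farthest_def)
qed

lemma tpoint_antipodes_eq_iff: "tp (x + centre) = tp (x - centre) \<longleftrightarrow> \<alpha> = pi / 2"
proof -
  have "(x + centre) - (x - centre) = 2 * centre" by simp
  then show ?thesis
    using tpoint_eq_iff two_centre_in_lattice_iff Re_v_eq_0_iff by presburger
qed

lemma card_lifts_at_radius:
  assumes "\<sigma> = 1 \<or> \<sigma> = -1"
  shows "card {s \<in> tp (x + \<sigma> * centre). cmod (s - x) = radius}
    = card {l \<in> L. cmod (centre - l) = radius}"
proof -
  have \<sigma>: "\<sigma> * \<sigma> = 1" "cmod \<sigma> = 1" using assms by (elim disjE; simp)+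
  have scaled: "\<sigma> * l \<in> L" if "l \<in> L" for l
    using assms that lattice_uminus[OF that] by (elim disjE) simp_all
  have "bij_betw (\<lambda>l. x + \<sigma> * (centre - l)) {l \<in> L. cmod (centre - l) = radius}
      {s \<in> tp (x + \<sigma> * centre). cmod (s - x) = radius}"
  proof (rule bij_betw_byWitness[where f' = "\<lambda>s. centre - \<sigma> * (s - x)"])
    show "\<forall>l\<in>{l \<in> L. cmod (centre - l) = radius}. centre - \<sigma> * (x + \<sigma> * (centre - l) - x) = l"
      using \<sigma> by (simp add: algebra_simps flip: mult.assoc)
    show "\<forall>s\<in>{s \<in> tp (x + \<sigma> * centre). cmod (s - x) = radius}.
        x + \<sigma> * (centre - (centre - \<sigma> * (s - x))) = s"
      using \<sigma> by (simp flip: mult.assoc)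
    show "(\<lambda>l. x + \<sigma> * (centre - l)) ` {l \<in> L. cmod (centre - l) = radius}
        \<subseteq> {s \<in> tp (x + \<sigma> * centre). cmod (s - x) = radius}"
    proof clarify
      fix l assume "l \<in> L" "cmod (centre - l) = radius"
      moreover have "x + \<sigma> * (centre - l) - (x + \<sigma> * centre) = \<sigma> * (- l)"
        by (simp add: algebra_simps)
      ultimately show "x + \<sigma> * (centre - l) \<in> tp (x + \<sigma> * centre) \<and>
          cmod (x + \<sigma> * (centre - l) - x) = radius"
        using scaled[of "- l"] \<sigma>(2) by (simp add: mem_tpoint_iff norm_mult lattice_uminus)
    qed
    show "(\<lambda>s. centre - \<sigma> * (s - x)) ` {s \<in> tp (x + \<sigma> * centre). cmod (s - x) = radius}
        \<subseteq> {l \<in> L. cmod (centre - l) = radius}"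
    proof clarify
      fix s assume s: "s \<in> tp (x + \<sigma> * centre)" "cmod (s - x) = radius"
      have eq: "centre - \<sigma> * (s - x) = \<sigma> * (- (s - (x + \<sigma> * centre)))"
        using \<sigma>(1) by (simp add: algebra_simps flip: mult.assoc)
      have "s - (x + \<sigma> * centre) \<in> L" using s(1) by (simp add: mem_tpoint_iff)
      then have "centre - \<sigma> * (s - x) \<in> L"
        unfolding eq by (intro scaled lattice_uminus)
      moreover have "cmod (centre - (centre - \<sigma> * (s - x))) = radius"
        using \<sigma>(2) s(2) by (simp add: norm_mult)
      ultimately show "centre - \<sigma> * (s - x) \<in> L \<and> cmod (centre - (centre - \<sigma> * (s - x))) = radius"
        by blast
    qed
  qed
  then show ?thesis by (simp add: bij_betw_same_card)
qed

lemma card_segments_to_farthest: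
  assumes "Q \<in> farthest a b \<alpha> (tp x)"
  shows "card (segments a b \<alpha> (tp x) Q) = card {l \<in> L. cmod (centre - l) = radius}"
proof -
  obtain \<sigma> :: complex where \<sigma>: "\<sigma> = 1 \<or> \<sigma> = -1" and Q: "Q = tp (x + \<sigma> * centre)"
  proof -
    have "Q = tp (x + 1 * centre) \<or> Q = tp (x + (-1) * centre)"
      using assms farthest_tpoint by simp
    then show thesis using that by blast
  qed
  have "tdist (tp x) Q = radius"
    using tdist_to_centre_translate[of "\<sigma> * centre" x] Q \<sigma> by fastforce
  then show ?thesis
    using card_segments[of Q x] radius_pos card_lifts_at_radius[OF \<sigma>] Q by simp
qed

lemma farthest_n_tpoint:
  "farthest_n a b \<alpha> n (tp x) =
    (if n = card {l \<in> L. cmod (centre - l) = radius} then farthest a b \<alpha> (tp x) else {})"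
  using card_segments_to_farthest by (auto simp: farthest_n_def)

end

theorem mainTheorem2:
  fixes a b \<alpha> :: real and P :: "complex set"
  assumes "a > 0" and "b > 0" and "0 < \<alpha>" and "\<alpha> \<le> pi / 2"
    and "2 * b * cos \<alpha> \<le> a" and "a \<le> b"
    and "P \<in> torus a b \<alpha>"
  shows "(\<alpha> = pi / 2 \<longrightarrow> card (farthest a b \<alpha> P) = 1 \<and> card (farthest_n a b \<alpha> 4 P) = 1)
       \<and> (\<alpha> < pi / 2 \<longrightarrow> card (farthest a b \<alpha> P) = 2 \<and> card (farthest_n a b \<alpha> 3 P) = 2)"
proof -
  interpret reduced_flat_torus a b \<alpha>
    using assms(1-6) by unfold_locales auto
  obtain x where P: "P = tp x" using assms(7) torus_iff by blast
  let ?N = "card {l \<in> L. cmod (centre - l) = radius}"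
  show ?thesis
  proof (intro conjI impI)
    assume "\<alpha> = pi / 2"
    then have "farthest a b \<alpha> P = {tp (x + centre)}" "?N = 4"
      using tpoint_antipodes_eq_iff card_lattice_points_on_circumcircle Re_v_eq_0_iff
      by (simp_all add: P farthest_tpoint)
    then show "card (farthest a b \<alpha> P) = 1" "card (farthest_n a b \<alpha> 4 P) = 1"
      by (simp_all add: P farthest_n_tpoint)
  next
    assume "\<alpha> < pi / 2"
    then have "card (farthest a b \<alpha> P) = 2" "?N = 3"
      using tpoint_antipodes_eq_iff card_lattice_points_on_circumcircle Re_v_eq_0_iff
      by (simp_all add: P farthest_tpoint)
    then show "card (farthest a b \<alpha> P) = 2" "card (farthest_n a b \<alpha> 3 P) = 2"
      by (simp_all add: P farthest_n_tpoint)
  qed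
qed

end
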